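(* Let $s(\cdot)\in\mathcal{P}(\mathbb{R})$ with $s(x)=s_0>2$ for all $x\in[4,5]$. Then the kernel $\tilde K(x,y)=K_1(y)K_2(x-y-1)$ does not belong to $H_{s(\cdot),2}$; in particular $\tilde K\notin H_{s(\cdot)}$.
   Context: Here $n=1$. Fix $\beta>0$; $K_1(t)=\chi_{[2,3]}(t)$ and $K_2(t)=t^{-1/2}\big[\log(e/t)\big]^{-\frac{1+\beta}{2}}\chi_{(0,1)}(t)$. Cubes are intervals $Q$; $mQ$ is the concentric interval of length $m\ell(Q)$. $\mathcal{P}(\mathbb{R})$: measurable $p(\cdot):\mathbb{R}\to[1,\infty]$; $\|f\|_{p(\cdot)}=\inf\{\lambda>0:\int_{\{p<\infty\}}|f/\lambda|^{p(x)}dx+\|(f/\lambda)\chi_{\{p=\infty\}}\|_\infty\le1\}$. $K\in H_{s(\cdot),2}$ means $\sup_Q\sup_{x,z\in\frac12Q}\sum_{m\ge1}2^m\ell(Q)\frac{\|[K(\cdot,x)-K(\cdot,z)]\chi_{2^mQ\setminus2^{m-1}Q}\|_{s(\cdot)}}{\|\chi_{2^mQ}\|_{s(\cdot)}}<\infty$; $H_{s(\cdot)}=H_{s(\cdot),1}\cap H_{s(\cdot),2}$, where $H_{s(\cdot),1}$ is the same condition with $K(x,\cdot)-K(z,\cdot)$. *)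

theory Defs
  imports "HOL-Analysis.Analysis" "HOL-Probability.Essential_Supremum"
begin

definition var_exp :: "(real \<Rightarrow> ereal) \<Rightarrow> bool" where
  "var_exp p \<longleftrightarrow> p \<in> borel_measurable borel \<and> (\<forall>x. 1 \<le> p x)"

definition var_modular :: "(real \<Rightarrow> ereal) \<Rightarrow> (real \<Rightarrow> real) \<Rightarrow> ennreal" where
  "var_modular p f =
     (\<integral>\<^sup>+ x. indicator {y. p y < \<infinity>} x * ennreal (\<bar>f x\<bar> powr real_of_ereal (p x)) \<partial>lborel)
     + esssup lborel (\<lambda>x. ennreal \<bar>f x\<bar> * indicator {y. p y = \<infinity>} x)"

text \<open>Luxemburg norm (value top if no admissible lambda).\<close>
definition var_norm :: "(real \<Rightarrow> ereal) \<Rightarrow> (real \<Rightarrow> real) \<Rightarrow> ennreal" where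
  "var_norm p f = Inf {ennreal r | r. r > 0 \<and> var_modular p (\<lambda>x. f x / r) \<le> 1}"

definition K1 :: "real \<Rightarrow> real" where
  "K1 t = indicator {2..3} t"

definition K2 :: "real \<Rightarrow> real \<Rightarrow> real" where
  "K2 \<beta> t = (if 0 < t \<and> t < 1
      then t powr (-1/2) * (ln (exp 1 / t)) powr (- (1 + \<beta>) / 2) else 0)"

definition Ktilde :: "real \<Rightarrow> real \<Rightarrow> real \<Rightarrow> real" where
  "Ktilde \<beta> x y = K1 y * K2 \<beta> (x - y - 1)"

text \<open>Interval Q with centre c and length l is cball c (l/2); mQ = cball c (m*l/2).
  The parameter index set: c, l > 0, x, z in (1/2)Q.\<close>
definition H_params :: "(real \<times> real \<times> real \<times> real) set" where
  "H_params = {(c, l, x, z). l > 0 \<and> x \<in> cball c (l/4) \<and> z \<in> cball c (l/4)}"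

definition H_sum :: "(real \<Rightarrow> ereal) \<Rightarrow> (real \<Rightarrow> real) \<Rightarrow> real \<Rightarrow> real \<Rightarrow> ennreal" where
  "H_sum s g c l =
     (\<Sum>m. let k = Suc m in
        ennreal (2 ^ k * l)
        * var_norm s (\<lambda>t. g t * indicator (cball c (2 ^ k * l / 2) - cball c (2 ^ (k - 1) * l / 2)) t)
        / var_norm s (indicator (cball c (2 ^ k * l / 2))))"

definition H_s2 :: "(real \<Rightarrow> ereal) \<Rightarrow> (real \<Rightarrow> real \<Rightarrow> real) \<Rightarrow> bool" where
  "H_s2 s K \<longleftrightarrow>
     (SUP (c, l, x, z) \<in> H_params. H_sum s (\<lambda>t. K t x - K t z) c l) < top"

definition H_s1 :: "(real \<Rightarrow> ereal) \<Rightarrow> (real \<Rightarrow> real \<Rightarrow> real) \<Rightarrow> bool" where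
  "H_s1 s K \<longleftrightarrow>
     (SUP (c, l, x, z) \<in> H_params. H_sum s (\<lambda>t. K x t - K z t) c l) < top"

definition H_s :: "(real \<Rightarrow> ereal) \<Rightarrow> (real \<Rightarrow> real \<Rightarrow> real) \<Rightarrow> bool" where
  "H_s s K \<longleftrightarrow> H_s1 s K \<and> H_s2 s K"

end

theory Submission
  imports Defs "HOL-Real_Asymp.Real_Asymp"
begin

text \<open>Take the interval \<open>Q = [5/2, 7/2]\<close> and the points \<open>x = 3\<close>, \<open>z = 31/10\<close> of \<open>Q/2\<close>.
  Since \<open>K\<^sub>1(3) = 1\<close> and \<open>K\<^sub>1(31/10) = 0\<close>, the difference \<open>K(t,x) - K(t,z)\<close> equals
  \<open>K\<^sub>2(t - 4)\<close> on \<open>(4,5)\<close>, which lies in the annulus \<open>4Q - 2Q\<close> where \<open>s = s\<^sub>0\<close>.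
  As \<open>s\<^sub>0/2 > 1\<close>, the power \<open>|K\<^sub>2(u)/r|^s\<^sub>0\<close> dominates \<open>1/u\<close> near \<open>u = 0\<close> for every \<open>r > 0\<close>,
  whatever the logarithmic factor; so every modular is infinite and the Luxemburg norm of that
  annulus piece is \<open>\<infinity>\<close>, while the norm of the indicator of \<open>4Q\<close> is finite.\<close>

lemma var_norm_eq_top_if_modular_eq_top:
  assumes "\<And>r. r > 0 \<Longrightarrow> var_modular s (\<lambda>t. f t / r) = top"
  shows "var_norm s f = top"
proof -
  have "{ennreal r | r. r > 0 \<and> var_modular s (\<lambda>t. f t / r) \<le> 1} = {}"
    using assms by (auto simp: top_unique)
  then show ?thesis
    unfolding var_norm_def by (simp only: Inf_empty)
qed

lemma var_modular_ge_nn_integral_on: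
  assumes "\<And>t. t \<in> A \<Longrightarrow> s t = ereal p"
  shows "(\<integral>\<^sup>+ t. ennreal (\<bar>f t\<bar> powr p) * indicator A t \<partial>lborel) \<le> var_modular s f"
proof -
  have "(\<integral>\<^sup>+ t. ennreal (\<bar>f t\<bar> powr p) * indicator A t \<partial>lborel)
      \<le> (\<integral>\<^sup>+ t. indicator {y. s y < \<infinity>} t * ennreal (\<bar>f t\<bar> powr real_of_ereal (s t)) \<partial>lborel)"
    by (intro nn_integral_mono) (auto simp: assms indicator_def)
  also have "\<dots> \<le> var_modular s f"
    unfolding var_modular_def by (rule add_increasing2) auto
  finally show ?thesis .
qed

lemma var_norm_indicator_le:
  assumes s: "var_exp s" and A: "A \<in> sets lborel" "emeasure lborel A < \<infinity>"
  shows "var_norm s (indicator A) \<le> ennreal (measure lborel A + 1)"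
proof -
  define r where "r = measure lborel A + 1"
  have "r \<ge> 1" by (simp add: r_def)
  let ?f = "\<lambda>t. indicator A t / r :: real"
  have "indicator {y. s y < \<infinity>} t * ennreal (\<bar>?f t\<bar> powr real_of_ereal (s t)) \<le> ennreal (1 / r) * indicator A t" for t
  proof (cases "t \<in> A \<and> s t < \<infinity>")
    case True
    have "1 \<le> s t"
      using s unfolding var_exp_def by simp
    then have "1 \<le> real_of_ereal (s t)"
      using True by (cases "s t") auto
    then have "(1 / r) powr real_of_ereal (s t) \<le> 1 / r"
      using \<open>r \<ge> 1\<close> by (intro powr_le_one_le) auto
    then show ?thesis using True \<open>r \<ge> 1\<close> by (auto intro: ennreal_leI)
  qed (auto simp: indicator_def)
  then have "(\<integral>\<^sup>+ t. indicator {y. s y < \<infinity>} t * ennreal (\<bar>?f t\<bar> powr real_of_ereal (s t)) \<partial>lborel)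
      \<le> (\<integral>\<^sup>+ t. ennreal (1 / r) * indicator A t \<partial>lborel)"
    by (rule nn_integral_mono)
  also have "\<dots> = ennreal (1 / r) * ennreal (measure lborel A)"
    using A by (simp add: nn_integral_cmult_indicator emeasure_eq_ennreal_measure)
  also have "\<dots> = ennreal (measure lborel A / r)"
    using \<open>r \<ge> 1\<close> by (subst ennreal_mult[symmetric]) auto
  finally have integral_le: "(\<integral>\<^sup>+ t. indicator {y. s y < \<infinity>} t * ennreal (\<bar>?f t\<bar> powr real_of_ereal (s t)) \<partial>lborel)
      \<le> ennreal (measure lborel A / r)" .
  have "s \<in> borel_measurable borel"
    using s unfolding var_exp_def by simp
  then have "(\<lambda>t. ennreal \<bar>?f t\<bar> * indicator {y. s y = \<infinity>} t) \<in> borel_measurable lborel"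
    using A by measurable
  then have esssup_le: "esssup lborel (\<lambda>t. ennreal \<bar>?f t\<bar> * indicator {y. s y = \<infinity>} t) \<le> ennreal (1 / r)"
    using \<open>r \<ge> 1\<close> by (intro esssup_I AE_I2) (auto simp: indicator_def)
  have "var_modular s ?f \<le> ennreal (measure lborel A / r) + ennreal (1 / r)"
    unfolding var_modular_def using integral_le esssup_le by (rule add_mono)
  also have "\<dots> = ennreal ((measure lborel A + 1) / r)"
    using \<open>r \<ge> 1\<close> by (simp add: add_divide_distrib flip: ennreal_plus)
  also have "\<dots> = 1"
    using \<open>r \<ge> 1\<close> by (simp flip: r_def)
  finally have "var_modular s ?f \<le> 1" .
  then show ?thesis
    using \<open>r \<ge> 1\<close> unfolding var_norm_def r_def[symmetric] by (intro Inf_lower) auto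
qed

lemma nn_integral_inverse_shift:
  fixes a \<epsilon> \<delta> :: real
  assumes "0 < \<epsilon>" "\<epsilon> \<le> \<delta>"
  shows "(\<integral>\<^sup>+ t. ennreal (1 / (t - a)) * indicator {a+\<epsilon>..a+\<delta>} t \<partial>lborel) = ennreal (ln \<delta> - ln \<epsilon>)"
proof -
  have "((\<lambda>t. 1 / (t - a)) has_integral (ln ((a+\<delta>) - a) - ln ((a+\<epsilon>) - a))) {a+\<epsilon>..a+\<delta>}"
  proof (rule fundamental_theorem_of_calculus)
    fix x assume "x \<in> {a+\<epsilon>..a+\<delta>}"
    then have "x > a" using assms by auto
    then have "((\<lambda>t. ln (t - a)) has_real_derivative 1 / (x - a)) (at x)"
      by (auto intro!: derivative_eq_intros)
    then show "((\<lambda>t. ln (t - a)) has_vector_derivative 1 / (x - a)) (at x within {a+\<epsilon>..a+\<delta>})"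
      using has_real_derivative_iff_has_vector_derivative has_vector_derivative_at_within by blast
  qed (use assms in simp)
  then show ?thesis
    using assms by (intro nn_integral_has_integral_lebesgue') auto
qed

lemma nn_integral_inverse_shift_eq_top:
  fixes a \<delta> :: real
  assumes "0 < \<delta>"
  shows "(\<integral>\<^sup>+ t. ennreal (1 / (t - a)) * indicator {a<..a+\<delta>} t \<partial>lborel) = top"
    (is "?I = top")
proof -
  have "of_nat n \<le> ?I" for n
  proof -
    define \<epsilon> where "\<epsilon> = \<delta> * exp (- real n)"
    have \<epsilon>: "0 < \<epsilon>" "\<epsilon> \<le> \<delta>"
      using assms by (auto simp: \<epsilon>_def mult_le_cancel_left1)
    have "of_nat n = ennreal (ln \<delta> - ln \<epsilon>)"
      using assms by (simp add: \<epsilon>_def ln_mult ennreal_of_nat_eq_real_of_nat)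
    also have "\<dots> = (\<integral>\<^sup>+ t. ennreal (1 / (t - a)) * indicator {a+\<epsilon>..a+\<delta>} t \<partial>lborel)"
      using \<epsilon> by (rule nn_integral_inverse_shift[symmetric])
    also have "\<dots> \<le> ?I"
      using \<epsilon> by (intro nn_integral_mono) (auto simp: indicator_def)
    finally show ?thesis .
  qed
  then have "(SUP n. of_nat n) \<le> ?I"
    by (rule SUP_least)
  then show ?thesis
    by (simp add: ennreal_SUP_of_nat_eq_top top_unique)
qed

lemma K2_powr_ge_inverse_eventually:
  fixes \<beta> r s0 :: real
  assumes "r > 0" "s0 > 2"
  shows "eventually (\<lambda>t. 1 / t \<le> (K2 \<beta> t / r) powr s0) (at_right 0)"
proof -
  have "eventually (\<lambda>t::real. 0 < t \<and> t < 1) (at_right 0)"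
    unfolding eventually_at_right_field by (intro exI[of _ 1]) auto
  moreover have "eventually (\<lambda>t. 1 / t \<le> (t powr (-1/2) * ln (exp 1 / t) powr (- (1 + \<beta>) / 2) / r) powr s0)
      (at_right 0)"
    using assms by real_asymp
  ultimately show ?thesis
    by eventually_elim (simp add: K2_def)
qed

lemma var_norm_eq_top_if_K2_singularity:
  fixes \<beta> s0 a :: real
  assumes "s0 > 2"
    and s: "\<And>t. t \<in> {a<..<a+1} \<Longrightarrow> s t = ereal s0"
    and f: "\<And>t. t \<in> {a<..<a+1} \<Longrightarrow> f t = K2 \<beta> (t - a)"
  shows "var_norm s f = top"
proof (rule var_norm_eq_top_if_modular_eq_top)
  fix r :: real
  assume "r > 0"
  obtain b where "b > 0" and b: "\<And>u. 0 < u \<Longrightarrow> u < b \<Longrightarrow> 1 / u \<le> (K2 \<beta> u / r) powr s0"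
    using K2_powr_ge_inverse_eventually[OF \<open>r > 0\<close> \<open>s0 > 2\<close>, of \<beta>]
    unfolding eventually_at_right_field by auto
  define \<delta> where "\<delta> = min (b/2) (1/2)"
  have "0 < \<delta>" "\<delta> < b" "\<delta> < 1"
    using \<open>b > 0\<close> by (auto simp: \<delta>_def)
  have "top = (\<integral>\<^sup>+ t. ennreal (1 / (t - a)) * indicator {a<..a+\<delta>} t \<partial>lborel)"
    using \<open>0 < \<delta>\<close> by (rule nn_integral_inverse_shift_eq_top[symmetric])
  also have "\<dots> \<le> (\<integral>\<^sup>+ t. ennreal (\<bar>f t / r\<bar> powr s0) * indicator {a<..a+\<delta>} t \<partial>lborel)"
  proof (intro nn_integral_mono)
    fix t
    show "ennreal (1 / (t - a)) * indicator {a<..a+\<delta>} t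
        \<le> ennreal (\<bar>f t / r\<bar> powr s0) * indicator {a<..a+\<delta>} t"
    proof (cases "t \<in> {a<..a+\<delta>}")
      case True
      then have "f t = K2 \<beta> (t - a)"
        using \<open>\<delta> < 1\<close> by (intro f) auto
      moreover have "1 / (t - a) \<le> (K2 \<beta> (t - a) / r) powr s0"
        using True \<open>\<delta> < b\<close> by (intro b) auto
      ultimately show ?thesis
        using True \<open>r > 0\<close> by (auto simp: K2_def intro: ennreal_leI)
    qed simp
  qed
  also have "\<dots> \<le> var_modular s (\<lambda>t. f t / r)"
    using \<open>\<delta> < 1\<close> by (intro var_modular_ge_nn_integral_on s) auto
  finally show "var_modular s (\<lambda>t. f t / r) = top"
    by (simp add: top_unique)
qed

lemma H_sum_eq_top_if_annulus_norm_eq_top: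
  assumes "l > 0"
    and "var_norm s (\<lambda>t. g t * indicator (cball c (2 ^ Suc m * l / 2) - cball c (2 ^ m * l / 2)) t) = top"
    and "var_norm s (indicator (cball c (2 ^ Suc m * l / 2))) \<noteq> top"
  shows "H_sum s g c l = top"
proof -
  define F where "F = (\<lambda>m. let k = Suc m in
        ennreal (2 ^ k * l)
        * var_norm s (\<lambda>t. g t * indicator (cball c (2 ^ k * l / 2) - cball c (2 ^ (k - 1) * l / 2)) t)
        / var_norm s (indicator (cball c (2 ^ k * l / 2))))"
  have "F m = top"
    using assms by (simp add: F_def ennreal_top_divide ennreal_mult_top)
  moreover have "F m \<le> suminf F"
    using sum_le_suminf[of F "{m}"] by simp
  ultimately show ?thesis
    unfolding H_sum_def F_def[symmetric] by (simp add: top_unique)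
qed

lemma not_H_s2_if_H_sum_eq_top:
  assumes "(c, l, x, z) \<in> H_params" "H_sum s (\<lambda>t. K t x - K t z) c l = top"
  shows "\<not> H_s2 s K"
proof -
  have "H_sum s (\<lambda>t. K t x - K t z) c l
      \<le> (SUP (c, l, x, z) \<in> H_params. H_sum s (\<lambda>t. K t x - K t z) c l)"
    using assms(1) by (rule SUP_upper2) simp
  then have SUP_eq_top: "(SUP (c, l, x, z) \<in> H_params. H_sum s (\<lambda>t. K t x - K t z) c l) = top"
    using assms(2) by (simp add: top_unique)
  show ?thesis
    unfolding H_s2_def by (subst SUP_eq_top) simp
qed

theorem mainTheorem20:
  fixes \<beta> s0 :: real and s :: "real \<Rightarrow> ereal"
  assumes "\<beta> > 0"
    and "var_exp s"
    and "s0 > 2"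
    and "\<And>x. x \<in> {4..5} \<Longrightarrow> s x = ereal s0"
  shows "\<not> H_s2 s (Ktilde \<beta>) \<and> \<not> H_s s (Ktilde \<beta>)"
proof -
  let ?g = "\<lambda>t. Ktilde \<beta> t 3 - Ktilde \<beta> t (31/10)"
  have "?g t * indicator (cball 3 2 - cball 3 1) t = K2 \<beta> (t - 4)" if "t \<in> {4<..<4+1}" for t
    using that by (auto simp: Ktilde_def K1_def dist_real_def)
  with assms(3,4) have "var_norm s (\<lambda>t. ?g t * indicator (cball 3 2 - cball 3 1) t) = top"
    by (intro var_norm_eq_top_if_K2_singularity[where a = 4 and \<beta> = \<beta>]) auto
  moreover have "var_norm s (indicator (cball (3::real) 2)) \<noteq> top"
  proof -
    have "var_norm s (indicator (cball (3::real) 2)) \<le> ennreal (measure lborel (cball (3::real) 2) + 1)"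
      by (rule var_norm_indicator_le[OF assms(2) _ emeasure_lborel_cball_finite]) simp
    then show ?thesis
      using ennreal_neq_top top_unique by metis
  qed
  ultimately have "H_sum s ?g 3 1 = top"
    by (intro H_sum_eq_top_if_annulus_norm_eq_top[where m = 1]) simp_all
  moreover have "(3, 1, 3, 31/10) \<in> H_params"
    unfolding H_params_def by (simp add: dist_real_def)
  ultimately have "\<not> H_s2 s (Ktilde \<beta>)"
    by (rule not_H_s2_if_H_sum_eq_top[rotated])
  then show ?thesis
    unfolding H_s_def by simp
qed

end
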